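(* Let $S$ be an $(l,r)$-framed algebra and define $(-,-):S\times S\to\mathbb{C}$ by $(a,b)1=(-1)^{s(\lambda)}a\cdot_0 b$ for $a\in S_\lambda$, $b\in S$ (bilinearly extended). Then for all $\lambda^i$ and $a_i\in S_{\lambda^i}$: (1) $S_{\lambda^1}$ and $S_{\lambda^2}$ are orthogonal if $\lambda^1\ne\lambda^2$; (2) the form is symmetric; (3) $(a_1\cdot a_2,a_3)=(-1)^{s(\lambda^1)}(a_2,a_1\cdot a_3)$; (4) the form is non-degenerate if and only if $S$ is simple.
   Context: Let $\mathrm{IS}=\{0,\frac12,\frac1{16}\}$ with fusion rule $\star$ (values are subsets): $0\star h=h\star0=\{h\}$, $\frac12\star\frac12=\{0\}$, $\frac12\star\frac1{16}=\frac1{16}\star\frac12=\{\frac1{16}\}$, $\frac1{16}\star\frac1{16}=\{0,\frac12\}$; $A(h_0,h_1,h_2,h_3)=\{h: h\in h_2\star h_3,\ h_0\in h_1\star h\}$. For $h\in A(h_0,h_1,h_2,h_3)$, $h'\in A(h_0,h_2,h_1,h_3)$ define $B^{h,h'}_{h_0,h_1,h_2,h_3}$: $B_{*,0,*,*}=B_{*,*,0,*}=1$; $B_{*,\frac12,\frac12,*}=-1$; $B_{a,\frac12,\frac1{16},a'}=B_{a,\frac1{16},\frac12,a'}=i$ if $a$ or $a'$ is $\frac12$, else $-i$; $B^{b,b'}_{a,\frac1{16},\frac1{16},a'}=e^{-\pi i/8}\cdot\{1$ if $a,a'\ne\frac1{16},a=a'$; $i$ if $a,a'\neq\frac1{16},a\ne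 a'$; $\frac{1+i}2$ if $a=a'=\frac1{16},b=b'$; $\frac{1-i}2$ if $a=a'=\frac1{16},b\neq b'\}$. $\mathrm{IS}^{(l,r)}=\mathrm{IS}^l\times\mathrm{IS}^r$, $\lambda=(h_1,..,h_l,\bar h_1,..,\bar h_r)$, $s(\lambda)=\sum h_i-\sum\bar h_j$; $\star$, $A$ componentwise; $B^{\lambda,\lambda'}_{\lambda^0,\dots,\lambda^3}=\prod_{i\le l}B^{h_i,h'_i}_{h^0_i,\dots,h^3_i}\prod_{j\le r}\overline{B^{\bar h_j,\bar h'_j}_{\bar h^0_j,\dots,\bar h^3_j}}$. An $(l,r)$-framed algebra: finite-dimensional $\mathrm{IS}^{(l,r)}$-graded $S=\bigoplus S_\lambda$ over $\mathbb{C}$ with bilinear product, nonzero $1\in S_0$ ($0=(0,\dots,0)$), $a\cdot_\lambda b$ the $S_\lambda$-component of $a\cdot b$, satisfying (FA1) $S_\lambda=0$ unless $s(\lambda)\in\mathbb{Z}$; (FA2) $S_0=\mathbb{C}1$, $1$ a two-sided unit; (FA3) $S_{\lambda^1}\cdot S_{\lambda^2}\subset\bigoplus_{\lambda\in\lambda^1\star\lambda^2}S_\lambda$; (FA4) $a_2\cdot_{\lambda^0}(a_1\cdot_{\lambda'}a_3)=\sum_{\lambda\in A(\lambda^0,\lambda^1,\lambda^2,\lambda^3)}B^{\lambda,\lambda'}_{\lambda^0,\lambda^1,\lambda^2,\lambda^3}a_1\cdot_{\lambda^0}(a_2\cdot_\lambda a_3)$ for $a_i\in S_{\lambda^i}$,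 $\lambda'\in A(\lambda^0,\lambda^2,\lambda^1,\lambda^3)$. An ideal is a graded subspace $M$ with $S\cdot M\subset M$; $S$ is simple if its only ideals are $0$ and $S$. *)

theory Defs
  imports Complex_Main
begin

datatype IS = IS0 | ISh | ISs

fun wt :: "IS \<Rightarrow> real" where
  "wt IS0 = 0" | "wt ISh = 1/2" | "wt ISs = 1/16"

fun fus :: "IS \<Rightarrow> IS \<Rightarrow> IS set" where
  "fus IS0 h = {h}"
| "fus h IS0 = {h}"
| "fus ISh ISh = {IS0}"
| "fus ISh ISs = {ISs}"
| "fus ISs ISh = {ISs}"
| "fus ISs ISs = {IS0, ISh}"

definition Aset :: "IS \<Rightarrow> IS \<Rightarrow> IS \<Rightarrow> IS \<Rightarrow> IS set" where
  "Aset h0 h1 h2 h3 = {h. h \<in> fus h2 h3 \<and> h0 \<in> fus h1 h}"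

text \<open>B^{h,h'}_{h0,h1,h2,h3}. The case h1 = h2 = 1/16 with exactly one of h0, h3 equal
  to 1/16 never occurs (A is then empty); its value is set to 0.\<close>
definition Bc :: "IS \<Rightarrow> IS \<Rightarrow> IS \<Rightarrow> IS \<Rightarrow> IS \<Rightarrow> IS \<Rightarrow> complex" where
  "Bc h h' h0 h1 h2 h3 =
    (if h1 = IS0 \<or> h2 = IS0 then 1
     else if h1 = ISh \<and> h2 = ISh then -1
     else if h1 = ISh \<or> h2 = ISh then (if h0 = ISh \<or> h3 = ISh then \<i> else - \<i>)
     else exp (- (complex_of_real pi * \<i>) / 8) *
       (if h0 \<noteq> ISs \<and> h3 \<noteq> ISs then (if h0 = h3 then 1 else \<i>)
        else if h0 = ISs \<and> h3 = ISs then (if h = h' then (1 + \<i>) / 2 else (1 - \<i>) / 2)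
        else 0))"

type_synonym idx = "IS list \<times> IS list"

definition Lam :: "nat \<Rightarrow> nat \<Rightarrow> idx set" where
  "Lam l r = {(x, y). length x = l \<and> length y = r}"

definition zidx :: "nat \<Rightarrow> nat \<Rightarrow> idx" where
  "zidx l r = (replicate l IS0, replicate r IS0)"

definition sw :: "idx \<Rightarrow> real" where
  "sw la = sum_list (map wt (fst la)) - sum_list (map wt (snd la))"

definition fusL :: "IS list \<Rightarrow> IS list \<Rightarrow> IS list set" where
  "fusL xs ys = {zs. length zs = length xs \<and> (\<forall>i<length xs. zs ! i \<in> fus (xs ! i) (ys ! i))}"

definition fusion :: "idx \<Rightarrow> idx \<Rightarrow> idx set" where
  "fusion la1 la2 = fusL (fst la1) (fst la2) \<times> fusL (snd la1) (snd la2)"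

definition AL :: "IS list \<Rightarrow> IS list \<Rightarrow> IS list \<Rightarrow> IS list \<Rightarrow> IS list set" where
  "AL h0 h1 h2 h3 = {zs. length zs = length h0 \<and>
      (\<forall>i<length h0. zs ! i \<in> Aset (h0 ! i) (h1 ! i) (h2 ! i) (h3 ! i))}"

definition Aidx :: "idx \<Rightarrow> idx \<Rightarrow> idx \<Rightarrow> idx \<Rightarrow> idx set" where
  "Aidx la0 la1 la2 la3 =
     AL (fst la0) (fst la1) (fst la2) (fst la3) \<times> AL (snd la0) (snd la1) (snd la2) (snd la3)"

definition BL :: "IS list \<Rightarrow> IS list \<Rightarrow> IS list \<Rightarrow> IS list \<Rightarrow> IS list \<Rightarrow> IS list \<Rightarrow> complex" where
  "BL h h' h0 h1 h2 h3 = (\<Prod>i<length h0. Bc (h ! i) (h' ! i) (h0 ! i) (h1 ! i) (h2 ! i) (h3 ! i))"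

definition Bidx :: "idx \<Rightarrow> idx \<Rightarrow> idx \<Rightarrow> idx \<Rightarrow> idx \<Rightarrow> idx \<Rightarrow> complex" where
  "Bidx la la' la0 la1 la2 la3 =
     BL (fst la) (fst la') (fst la0) (fst la1) (fst la2) (fst la3) *
     cnj (BL (snd la) (snd la') (snd la0) (snd la1) (snd la2) (snd la3))"

text \<open>The algebra is the whole type 'v, a complex vector space via scale, with grading
  S :: idx => 'v set (S la = 0 for la outside IS^(l,r)).\<close>

definition is_decomp :: "nat \<Rightarrow> nat \<Rightarrow> (idx \<Rightarrow> 'v::ab_group_add set) \<Rightarrow> (idx \<Rightarrow> 'v) \<Rightarrow> 'v \<Rightarrow> bool" where
  "is_decomp l r S c v \<longleftrightarrow> (\<forall>\<mu>. c \<mu> \<in> S \<mu>) \<and> v = (\<Sum>\<mu>\<in>Lam l r. c \<mu>)"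

definition comp :: "nat \<Rightarrow> nat \<Rightarrow> (idx \<Rightarrow> 'v::ab_group_add set) \<Rightarrow> idx \<Rightarrow> 'v \<Rightarrow> 'v" where
  "comp l r S la v = (THE c. is_decomp l r S c v) la"

definition bilinear_map :: "(complex \<Rightarrow> 'v::ab_group_add \<Rightarrow> 'v) \<Rightarrow> ('v \<Rightarrow> 'v \<Rightarrow> 'v) \<Rightarrow> bool" where
  "bilinear_map scale m \<longleftrightarrow>
     (\<forall>x y z. m (x + y) z = m x z + m y z) \<and> (\<forall>x y z. m x (y + z) = m x y + m x z) \<and>
     (\<forall>c x y. m (scale c x) y = scale c (m x y)) \<and> (\<forall>c x y. m x (scale c y) = scale c (m x y))"

definition framed_algebra ::
  "nat \<Rightarrow> nat \<Rightarrow> (complex \<Rightarrow> 'v::ab_group_add \<Rightarrow> 'v) \<Rightarrow> (idx \<Rightarrow> 'v set) \<Rightarrow> ('v \<Rightarrow> 'v \<Rightarrow> 'v) \<Rightarrow> 'v \<Rightarrow> bool" where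
  "framed_algebra l r scale S mult one \<longleftrightarrow>
     vector_space scale \<and>
     (\<exists>B. finite B \<and> module.span scale B = UNIV) \<and>
     (\<forall>la. module.subspace scale (S la)) \<and>
     (\<forall>la. la \<notin> Lam l r \<longrightarrow> S la = {0}) \<and>
     (\<forall>v. \<exists>!c. is_decomp l r S c v) \<and>
     bilinear_map scale mult \<and>
     one \<noteq> 0 \<and>
     \<comment> \<open>FA1\<close>
     (\<forall>la\<in>Lam l r. sw la \<notin> \<int> \<longrightarrow> S la = {0}) \<and>
     \<comment> \<open>FA2\<close>
     S (zidx l r) = range (\<lambda>c. scale c one) \<and>
     (\<forall>a. mult one a = a \<and> mult a one = a) \<and>
     \<comment> \<open>FA3\<close>
     (\<forall>la1\<in>Lam l r. \<forall>la2\<in>Lam l r. \<forall>a\<in>S la1. \<forall>b\<in>S la2. \<forall>la.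
        la \<notin> fusion la1 la2 \<longrightarrow> comp l r S la (mult a b) = 0) \<and>
     \<comment> \<open>FA4\<close>
     (\<forall>la0\<in>Lam l r. \<forall>la1\<in>Lam l r. \<forall>la2\<in>Lam l r. \<forall>la3\<in>Lam l r.
      \<forall>a1\<in>S la1. \<forall>a2\<in>S la2. \<forall>a3\<in>S la3. \<forall>la'\<in>Aidx la0 la2 la1 la3.
        comp l r S la0 (mult a2 (comp l r S la' (mult a1 a3))) =
        (\<Sum>la\<in>Aidx la0 la1 la2 la3.
            scale (Bidx la la' la0 la1 la2 la3) (comp l r S la0 (mult a1 (comp l r S la (mult a2 a3))))))"

definition coef :: "(complex \<Rightarrow> 'v \<Rightarrow> 'v) \<Rightarrow> 'v \<Rightarrow> 'v \<Rightarrow> complex" where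
  "coef scale one u = (THE c. u = scale c one)"

definition bform :: "nat \<Rightarrow> nat \<Rightarrow> (complex \<Rightarrow> 'v::ab_group_add \<Rightarrow> 'v) \<Rightarrow> (idx \<Rightarrow> 'v set) \<Rightarrow>
    ('v \<Rightarrow> 'v \<Rightarrow> 'v) \<Rightarrow> 'v \<Rightarrow> 'v \<Rightarrow> 'v \<Rightarrow> complex" where
  "bform l r scale S mult one a b =
     (\<Sum>la\<in>Lam l r. ((-1::complex) powi \<lfloor>sw la\<rfloor>) *
         coef scale one (comp l r S (zidx l r) (mult (comp l r S la a) b)))"

definition graded_ideal ::
  "nat \<Rightarrow> nat \<Rightarrow> (complex \<Rightarrow> 'v::ab_group_add \<Rightarrow> 'v) \<Rightarrow> (idx \<Rightarrow> 'v set) \<Rightarrow> ('v \<Rightarrow> 'v \<Rightarrow> 'v) \<Rightarrow> 'v set \<Rightarrow> bool" where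
  "graded_ideal l r scale S mult M \<longleftrightarrow>
     module.subspace scale M \<and> (\<forall>v\<in>M. \<forall>la. comp l r S la v \<in> M) \<and> (\<forall>a. \<forall>m\<in>M. mult a m \<in> M)"

definition simple_algebra ::
  "nat \<Rightarrow> nat \<Rightarrow> (complex \<Rightarrow> 'v::ab_group_add \<Rightarrow> 'v) \<Rightarrow> (idx \<Rightarrow> 'v set) \<Rightarrow> ('v \<Rightarrow> 'v \<Rightarrow> 'v) \<Rightarrow> bool" where
  "simple_algebra l r scale S mult \<longleftrightarrow>
     (\<forall>M. graded_ideal l r scale S mult M \<longrightarrow> M = {0} \<or> M = UNIV)"

definition nondegenerate :: "('v::zero \<Rightarrow> 'v \<Rightarrow> complex) \<Rightarrow> bool" where
  "nondegenerate f \<longleftrightarrow> (\<forall>a. (\<forall>b. f a b = 0) \<longrightarrow> a = 0) \<and> (\<forall>b. (\<forall>a. f a b = 0) \<longrightarrow> b = 0)"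

end

theory Submission
  imports Defs
begin

(*
  Since S_0 = C 1, the form only sees S_0-components of products, and by FA3 together with
  "0 \<in> \<lambda> \<star> \<mu> iff \<lambda> = \<mu>" the S_0-component of a product of homogeneous elements vanishes unless
  their degrees agree; this gives orthogonality.  Specialising FA4 to a_3 = 1, resp. to
  \<lambda>^0 = 0, gives a commutation rule a_2 a_1 = B a_1 a_2 and an exchange rule between
  a_2 (a_1 a_3) and a_1 (a_2 a_3) on single components.  Symmetry and invariance then reduce to
  identities between B-coefficients and the signs (-1)^s(\<lambda>).  When s(\<lambda>) is an integer, this
  sign is the product of the phases e^(\<pi> i h) of the left entries of \<lambda> and the conjugate phases
  of its right entries, so these identities factor coordinatewise and are checked on IS itself.
  Finally, the radical of the form is a graded ideal not containing 1, and conversely every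
  nonzero graded ideal of a non-degenerate S contains 1.
*)

section \<open>Fusion rules\<close>

lemma UNIV_IS: "(UNIV :: IS set) = {IS0, ISh, ISs}"
  using IS.exhaust by auto

lemma finite_Lam [simp]: "finite (Lam l r)"
proof -
  have "Lam l r = {xs. set xs \<subseteq> UNIV \<and> length xs = l} \<times> {ys. set ys \<subseteq> UNIV \<and> length ys = r}"
    by (auto simp: Lam_def)
  then show ?thesis
    by (simp add: UNIV_IS finite_lists_length_eq)
qed

lemma zidx_in_Lam: "zidx l r \<in> Lam l r"
  by (simp add: zidx_def Lam_def)

lemma fus_commute: "h \<in> fus h1 h2 \<longleftrightarrow> h \<in> fus h2 h1"
  by (cases h1; cases h2; cases h; simp)

lemma fus_swap: "h3 \<in> fus h1 h2 \<longleftrightarrow> h2 \<in> fus h1 h3"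
  by (cases h1; cases h2; cases h3; simp)

lemma IS0_in_fus_iff: "IS0 \<in> fus h1 h2 \<longleftrightarrow> h1 = h2"
  by (cases h1; cases h2; simp)

lemma Aset_IS0_left: "Aset IS0 h1 h2 h3 = (if h1 \<in> fus h2 h3 then {h1} else {})"
  by (auto simp: Aset_def IS0_in_fus_iff)

lemma Aset_IS0_right: "Aset h0 h1 h2 IS0 = (if h0 \<in> fus h1 h2 then {h2} else {})"
  by (cases h2; auto simp: Aset_def)

lemma fusL_commute: "length xs = length ys \<Longrightarrow> fusL xs ys = fusL ys xs"
  by (auto simp: fusL_def fus_commute)

lemma fusL_swap:
  "length xs = n \<Longrightarrow> length ys = n \<Longrightarrow> length zs = n \<Longrightarrow> zs \<in> fusL xs ys \<longleftrightarrow> ys \<in> fusL xs zs"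
  by (auto simp: fusL_def fus_swap[of "zs ! i" "xs ! i" "ys ! i" for i])

lemma replicate_IS0_in_fusL_iff:
  "length xs = n \<Longrightarrow> length ys = n \<Longrightarrow> replicate n IS0 \<in> fusL xs ys \<longleftrightarrow> xs = ys"
  by (auto simp: fusL_def IS0_in_fus_iff intro: nth_equalityI)

lemma AL_replicate_IS0_left:
  "length xs = n \<Longrightarrow> length ys = n \<Longrightarrow>
    AL (replicate n IS0) xs ys zs = (if xs \<in> fusL ys zs then {xs} else {})"
  by (auto simp: AL_def Aset_IS0_left fusL_def split: if_splits intro: nth_equalityI)

lemma AL_replicate_IS0_right:
  "length ws = n \<Longrightarrow> length xs = n \<Longrightarrow> length ys = n \<Longrightarrow>
    AL ws xs ys (replicate n IS0) = (if ws \<in> fusL xs ys then {ys} else {})"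
  by (auto simp: AL_def Aset_IS0_right fusL_def split: if_splits intro: nth_equalityI)

lemma fusion_commute:
  "la1 \<in> Lam l r \<Longrightarrow> la2 \<in> Lam l r \<Longrightarrow> la \<in> fusion la1 la2 \<longleftrightarrow> la \<in> fusion la2 la1"
  by (cases la1; cases la2; simp add: fusion_def Lam_def fusL_commute)

lemma fusion_swap:
  "la1 \<in> Lam l r \<Longrightarrow> la2 \<in> Lam l r \<Longrightarrow> la3 \<in> Lam l r \<Longrightarrow>
    la3 \<in> fusion la1 la2 \<longleftrightarrow> la2 \<in> fusion la1 la3"
  by (cases la1; cases la2; cases la3;
      simp add: fusion_def Lam_def fusL_swap[where n = l] fusL_swap[where n = r])

lemma fusion_rotate:
  "la1 \<in> Lam l r \<Longrightarrow> la2 \<in> Lam l r \<Longrightarrow> la3 \<in> Lam l r \<Longrightarrow>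
    la2 \<in> fusion la1 la3 \<longleftrightarrow> la1 \<in> fusion la2 la3"
  by (metis fusion_commute fusion_swap)

lemma zidx_in_fusion_iff:
  "la1 \<in> Lam l r \<Longrightarrow> la2 \<in> Lam l r \<Longrightarrow> zidx l r \<in> fusion la1 la2 \<longleftrightarrow> la1 = la2"
  by (cases la1; cases la2; simp add: fusion_def Lam_def zidx_def replicate_IS0_in_fusL_iff)

lemma Aidx_zidx_left:
  "la1 \<in> Lam l r \<Longrightarrow> la2 \<in> Lam l r \<Longrightarrow>
    Aidx (zidx l r) la1 la2 la3 = (if la1 \<in> fusion la2 la3 then {la1} else {})"
  by (cases la1; cases la2; cases la3;
      simp add: Aidx_def fusion_def Lam_def zidx_def AL_replicate_IS0_left)

lemma Aidx_zidx_right: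
  "la0 \<in> Lam l r \<Longrightarrow> la1 \<in> Lam l r \<Longrightarrow> la2 \<in> Lam l r \<Longrightarrow>
    Aidx la0 la1 la2 (zidx l r) = (if la0 \<in> fusion la1 la2 then {la2} else {})"
  by (cases la0; cases la1; cases la2;
      simp add: Aidx_def fusion_def Lam_def zidx_def AL_replicate_IS0_right)

section \<open>Phases and the braiding coefficients\<close>

definition phase :: "IS \<Rightarrow> complex" where
  "phase h = cis (pi * wt h)"

definition phase_list :: "IS list \<Rightarrow> complex" where
  "phase_list xs = (\<Prod>i<length xs. phase (xs ! i))"

definition idx_sign :: "idx \<Rightarrow> complex" where
  "idx_sign la = (-1) powi \<lfloor>sw la\<rfloor>"

lemma phase_simps: "phase IS0 = 1" "phase ISh = \<i>" "phase ISs = cis (pi / 16)"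
  by (simp_all add: phase_def)

lemma exp_neg_pi_div_8_eq_phase: "exp (- (complex_of_real pi * \<i>) / 8) = inverse (phase ISs ^ 2)"
proof -
  have "exp (- (complex_of_real pi * \<i>) / 8) = cis (- pi / 8)"
    by (simp add: cis_conv_exp algebra_simps)
  also have "\<dots> = inverse (cis (pi / 16) ^ 2)"
    by (simp add: DeMoivre flip: cis_inverse)
  finally show ?thesis
    by (simp add: phase_simps)
qed

lemma Bc_symmetry_phase: "Bc h h IS0 h h IS0 * phase h ^ 2 = 1"
  unfolding Bc_def exp_neg_pi_div_8_eq_phase
  by (cases h; simp add: phase_simps field_simps)

lemma Bc_invariance_phase:
  "h3 \<in> fus h1 h2 \<Longrightarrow>
    phase h3 ^ 3 * Bc h1 h3 IS0 h1 h3 h2 * Bc h3 h2 h1 h2 h3 IS0 = phase h1 * phase h2 * Bc h1 h2 IS0 h1 h2 h3"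
  unfolding Bc_def exp_neg_pi_div_8_eq_phase
  by (cases h1; cases h2; cases h3;
      simp add: phase_simps field_simps power2_eq_square power3_eq_cube)

lemma BL_symmetry_phase:
  assumes "length xs = n"
  shows "BL xs xs (replicate n IS0) xs xs (replicate n IS0) * phase_list xs ^ 2 = 1"
proof -
  have "BL xs xs (replicate n IS0) xs xs (replicate n IS0) * phase_list xs ^ 2
      = (\<Prod>i<n. Bc (xs ! i) (xs ! i) IS0 (xs ! i) (xs ! i) IS0 * phase (xs ! i) ^ 2)"
    using assms by (simp add: phase_list_def BL_def prod.distrib prod_power_distrib)
  then show ?thesis
    by (simp add: Bc_symmetry_phase)
qed

lemma BL_invariance_phase:
  assumes "length xs = n" "length ys = n" "length zs = n" "zs \<in> fusL xs ys"
  shows "phase_list zs ^ 3 * BL xs zs (replicate n IS0) xs zs ys * BL zs ys xs ys zs (replicate n IS0)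
       = phase_list xs * phase_list ys * BL xs ys (replicate n IS0) xs ys zs"
proof -
  have "phase_list zs ^ 3 * BL xs zs (replicate n IS0) xs zs ys * BL zs ys xs ys zs (replicate n IS0)
      = (\<Prod>i<n. phase (zs ! i) ^ 3 * Bc (xs ! i) (zs ! i) IS0 (xs ! i) (zs ! i) (ys ! i) *
                  Bc (zs ! i) (ys ! i) (xs ! i) (ys ! i) (zs ! i) IS0)"
    using assms by (simp add: phase_list_def BL_def prod.distrib prod_power_distrib)
  also have "\<dots> = (\<Prod>i<n. phase (xs ! i) * phase (ys ! i) * Bc (xs ! i) (ys ! i) IS0 (xs ! i) (ys ! i) (zs ! i))"
    using assms by (intro prod.cong refl Bc_invariance_phase) (auto simp: fusL_def)
  also have "\<dots> = phase_list xs * phase_list ys * BL xs ys (replicate n IS0) xs ys zs"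
    using assms by (simp add: phase_list_def BL_def prod.distrib)
  finally show ?thesis .
qed

lemma phase_list_eq_cis: "phase_list xs = cis (pi * sum_list (map wt xs))"
proof (induction xs)
  case Nil
  then show ?case by (simp add: phase_list_def)
next
  case (Cons x xs)
  have "phase_list (x # xs) = phase x * phase_list xs"
    unfolding phase_list_def length_Cons prod.lessThan_Suc_shift by simp
  then show ?case
    using Cons by (simp add: phase_def cis_mult algebra_simps)
qed

lemma idx_sign_square: "idx_sign la * idx_sign la = 1"
  by (simp add: idx_sign_def)

lemma idx_sign_eq_phase_list:
  assumes "sw la \<in> \<int>"
  shows "idx_sign la = phase_list (fst la) * cnj (phase_list (snd la))"
proof -
  obtain k where k: "sw la = of_int k"
    using assms Ints_cases by blast
  have "phase_list (fst la) * cnj (phase_list (snd la)) = cis (pi * sw la)"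
    by (simp add: phase_list_eq_cis cis_cnj cis_mult sw_def algebra_simps)
  also have "\<dots> = exp (of_int k * (complex_of_real pi * \<i>))"
    by (simp add: k cis_conv_exp algebra_simps)
  also have "\<dots> = exp (complex_of_real pi * \<i>) powi k"
    by (rule exp_power_int[symmetric])
  also have "\<dots> = idx_sign la"
    by (simp add: idx_sign_def k)
  finally show ?thesis by simp
qed

lemma Bidx_symmetry:
  assumes "la \<in> Lam l r" "sw la \<in> \<int>"
  shows "Bidx la la (zidx l r) la la (zidx l r) = 1"
proof -
  obtain xs ys where la: "la = (xs, ys)" by fastforce
  have len: "length xs = l" "length ys = r"
    using assms by (auto simp: Lam_def la)
  have sign: "idx_sign la = phase_list xs * cnj (phase_list ys)"
    using idx_sign_eq_phase_list assms la by auto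
  have "Bidx la la (zidx l r) la la (zidx l r) = Bidx la la (zidx l r) la la (zidx l r) * (idx_sign la * idx_sign la)"
    by (simp add: idx_sign_square)
  also have "\<dots> = (BL xs xs (replicate l IS0) xs xs (replicate l IS0) * phase_list xs ^ 2) *
       cnj (BL ys ys (replicate r IS0) ys ys (replicate r IS0) * phase_list ys ^ 2)"
    unfolding sign by (simp add: Bidx_def zidx_def la power2_eq_square)
  also have "\<dots> = 1"
    using BL_symmetry_phase[OF len(1)] BL_symmetry_phase[OF len(2)] by simp
  finally show ?thesis .
qed

lemma Bidx_invariance_sign:
  assumes L: "la1 \<in> Lam l r" "la2 \<in> Lam l r" "la3 \<in> Lam l r"
    and int: "sw la1 \<in> \<int>" "sw la2 \<in> \<int>" "sw la3 \<in> \<int>"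
    and "la3 \<in> fusion la1 la2"
  shows "idx_sign la3 * Bidx la1 la3 (zidx l r) la1 la3 la2 * Bidx la3 la2 la1 la2 la3 (zidx l r)
       = idx_sign la1 * idx_sign la2 * Bidx la1 la2 (zidx l r) la1 la2 la3"
proof -
  obtain xs1 ys1 where la1: "la1 = (xs1, ys1)" by fastforce
  obtain xs2 ys2 where la2: "la2 = (xs2, ys2)" by fastforce
  obtain xs3 ys3 where la3: "la3 = (xs3, ys3)" by fastforce
  have len: "length xs1 = l" "length xs2 = l" "length xs3 = l"
    "length ys1 = r" "length ys2 = r" "length ys3 = r"
    using L by (auto simp: Lam_def la1 la2 la3)
  have fus: "xs3 \<in> fusL xs1 xs2" "ys3 \<in> fusL ys1 ys2"
    using assms(7) by (auto simp: fusion_def la1 la2 la3)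
  have sign: "idx_sign la1 = phase_list xs1 * cnj (phase_list ys1)"
    "idx_sign la2 = phase_list xs2 * cnj (phase_list ys2)"
    "idx_sign la3 = phase_list xs3 * cnj (phase_list ys3)"
    using idx_sign_eq_phase_list int la1 la2 la3 by auto
  have cube: "idx_sign la3 = (phase_list xs3 * cnj (phase_list ys3)) ^ 3"
    using idx_sign_square[of la3] sign(3) by (simp add: power3_eq_cube)
  have "idx_sign la3 * Bidx la1 la3 (zidx l r) la1 la3 la2 * Bidx la3 la2 la1 la2 la3 (zidx l r)
      = (phase_list xs3 ^ 3 * BL xs1 xs3 (replicate l IS0) xs1 xs3 xs2 * BL xs3 xs2 xs1 xs2 xs3 (replicate l IS0)) *
        cnj (phase_list ys3 ^ 3 * BL ys1 ys3 (replicate r IS0) ys1 ys3 ys2 * BL ys3 ys2 ys1 ys2 ys3 (replicate r IS0))"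
    unfolding cube by (simp add: Bidx_def zidx_def la1 la2 la3 power_mult_distrib)
  also have "\<dots> = idx_sign la1 * idx_sign la2 * Bidx la1 la2 (zidx l r) la1 la2 la3"
    unfolding BL_invariance_phase[OF len(1-3) fus(1)] BL_invariance_phase[OF len(4-6) fus(2)] sign
    by (simp add: Bidx_def zidx_def la1 la2 la3)
  finally show ?thesis .
qed

section \<open>Homogeneous components in a framed algebra\<close>

locale framed_alg =
  fixes l r :: nat
    and scale :: "complex \<Rightarrow> 'v::ab_group_add \<Rightarrow> 'v"
    and S :: "idx \<Rightarrow> 'v set"
    and mult :: "'v \<Rightarrow> 'v \<Rightarrow> 'v"
    and one :: 'v
  assumes framed: "framed_algebra l r scale S mult one"
begin

abbreviation "L \<equiv> Lam l r"
abbreviation "Z \<equiv> zidx l r"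
abbreviation "proj \<equiv> comp l r S"
abbreviation "bf \<equiv> bform l r scale S mult one"

lemma
  shows vector_space_scale: "vector_space scale"
    and subspace_S: "module.subspace scale (S la)"
    and S_outside_Lam: "la \<notin> L \<Longrightarrow> S la = {0}"
    and unique_decomp: "\<exists>!c. is_decomp l r S c v"
    and bilinear: "bilinear_map scale mult"
    and one_neq_zero: "one \<noteq> 0"
    and S_nonintegral: "la \<in> L \<Longrightarrow> sw la \<notin> \<int> \<Longrightarrow> S la = {0}"
    and S_zidx: "S Z = range (\<lambda>c. scale c one)"
    and mult_one [simp]: "mult a one = a"
    and proj_mult_outside_fusion: "la1 \<in> L \<Longrightarrow> la2 \<in> L \<Longrightarrow> a \<in> S la1 \<Longrightarrow> b \<in> S la2 \<Longrightarrow>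
      la \<notin> fusion la1 la2 \<Longrightarrow> proj la (mult a b) = 0"
    and braiding: "la0 \<in> L \<Longrightarrow> la1 \<in> L \<Longrightarrow> la2 \<in> L \<Longrightarrow> la3 \<in> L \<Longrightarrow>
      a1 \<in> S la1 \<Longrightarrow> a2 \<in> S la2 \<Longrightarrow> a3 \<in> S la3 \<Longrightarrow> la' \<in> Aidx la0 la2 la1 la3 \<Longrightarrow>
      proj la0 (mult a2 (proj la' (mult a1 a3))) =
      (\<Sum>la\<in>Aidx la0 la1 la2 la3.
         scale (Bidx la la' la0 la1 la2 la3) (proj la0 (mult a1 (proj la (mult a2 a3)))))"
  using framed unfolding framed_algebra_def by (simp_all only: Ball_def simp_thms)

sublocale vs: vector_space scale
  by (rule vector_space_scale)

lemma zero_in_S [simp]: "0 \<in> S la"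
  using subspace_S vs.subspace_0 by blast

lemma add_in_S: "x \<in> S la \<Longrightarrow> y \<in> S la \<Longrightarrow> x + y \<in> S la"
  using subspace_S vs.subspace_add by blast

lemma scale_in_S: "x \<in> S la \<Longrightarrow> scale c x \<in> S la"
  using subspace_S vs.subspace_scale by blast

lemma one_in_S_zidx: "one \<in> S Z"
  unfolding S_zidx by (metis rangeI vs.scale_one)

lemma homogeneous_nonintegral_eq_0: "la \<in> L \<Longrightarrow> sw la \<notin> \<int> \<Longrightarrow> a \<in> S la \<Longrightarrow> a = 0"
  using S_nonintegral by blast

lemma mult_add_left: "mult (x + y) z = mult x z + mult y z"
  using bilinear by (simp add: bilinear_map_def)

lemma mult_add_right: "mult x (y + z) = mult x y + mult x z"
  using bilinear by (simp add: bilinear_map_def)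

lemma mult_scale_left: "mult (scale c x) y = scale c (mult x y)"
  using bilinear by (simp add: bilinear_map_def)

lemma mult_scale_right: "mult x (scale c y) = scale c (mult x y)"
  using bilinear by (simp add: bilinear_map_def)

lemma mult_zero_left [simp]: "mult 0 y = 0"
  using mult_add_left[of 0 0 y] by simp

lemma mult_zero_right [simp]: "mult x 0 = 0"
  using mult_add_right[of x 0 0] by simp

lemma mult_sum_left: "mult (\<Sum>i\<in>I. f i) y = (\<Sum>i\<in>I. mult (f i) y)"
  by (induction I rule: infinite_finite_induct) (simp_all add: mult_add_left)

lemma mult_sum_right: "mult x (\<Sum>i\<in>I. f i) = (\<Sum>i\<in>I. mult x (f i))"
  by (induction I rule: infinite_finite_induct) (simp_all add: mult_add_right)

lemma is_decomp_proj: "is_decomp l r S (\<lambda>\<mu>. proj \<mu> v) v"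
  using theI'[OF unique_decomp] unfolding comp_def by simp

lemma proj_in_S: "proj \<mu> v \<in> S \<mu>"
  using is_decomp_proj unfolding is_decomp_def by blast

lemma sum_proj: "(\<Sum>\<mu>\<in>L. proj \<mu> v) = v"
  using is_decomp_proj unfolding is_decomp_def by simp

lemma proj_unique: "is_decomp l r S c v \<Longrightarrow> proj \<mu> v = c \<mu>"
  using unique_decomp is_decomp_proj by metis

lemma proj_outside_Lam: "\<mu> \<notin> L \<Longrightarrow> proj \<mu> v = 0"
  using proj_in_S S_outside_Lam by blast

lemma proj_homogeneous:
  assumes "a \<in> S la"
  shows "proj \<mu> a = (if \<mu> = la then a else 0)"
proof (cases "la \<in> L")
  case True
  with assms have "is_decomp l r S (\<lambda>\<mu>. if \<mu> = la then a else 0) a"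
    by (simp add: is_decomp_def)
  then show ?thesis by (rule proj_unique)
next
  case False
  with assms have "a = 0"
    using S_outside_Lam by blast
  moreover have "is_decomp l r S (\<lambda>\<mu>. 0) 0" by (simp add: is_decomp_def)
  ultimately show ?thesis using proj_unique by simp
qed

lemma proj_zero [simp]: "proj \<mu> 0 = 0"
  using proj_homogeneous[OF zero_in_S] by simp

lemma proj_self: "a \<in> S la \<Longrightarrow> proj la a = a"
  by (simp add: proj_homogeneous)

lemma proj_proj: "proj \<nu> (proj \<mu> v) = (if \<nu> = \<mu> then proj \<mu> v else 0)"
  using proj_homogeneous[OF proj_in_S] by simp

lemma proj_add: "proj \<mu> (v + w) = proj \<mu> v + proj \<mu> w"
proof -
  have "is_decomp l r S (\<lambda>\<mu>. proj \<mu> v + proj \<mu> w) (v + w)"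
    unfolding is_decomp_def by (simp add: add_in_S proj_in_S sum.distrib sum_proj)
  then show ?thesis by (rule proj_unique)
qed

lemma proj_scale: "proj \<mu> (scale c v) = scale c (proj \<mu> v)"
proof -
  have "is_decomp l r S (\<lambda>\<mu>. scale c (proj \<mu> v)) (scale c v)"
    unfolding is_decomp_def by (simp add: scale_in_S proj_in_S sum_proj flip: vs.scale_sum_right)
  then show ?thesis by (rule proj_unique)
qed

lemma proj_sum: "proj \<mu> (\<Sum>i\<in>I. f i) = (\<Sum>i\<in>I. proj \<mu> (f i))"
  by (induction I rule: infinite_finite_induct) (simp_all add: proj_add)

lemma exists_proj_neq_0: "v \<noteq> 0 \<Longrightarrow> \<exists>\<mu>\<in>L. proj \<mu> v \<noteq> 0"
  using sum_proj[of v] sum.neutral by metis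

definition coeff0 :: "'v \<Rightarrow> complex" where
  "coeff0 v = coef scale one (proj Z v)"

lemma coef_scale_one [simp]: "coef scale one (scale c one) = c"
  unfolding coef_def using one_neq_zero by (rule_tac the_equality) auto

lemma proj_zidx_eq_scale_coeff0: "proj Z v = scale (coeff0 v) one"
  using proj_in_S[of Z v] unfolding coeff0_def S_zidx by auto

lemma coeff0_cong: "proj Z v = proj Z w \<Longrightarrow> coeff0 v = coeff0 w"
  unfolding coeff0_def by simp

lemma coeff0_add: "coeff0 (v + w) = coeff0 v + coeff0 w"
proof -
  have "proj Z (v + w) = scale (coeff0 v + coeff0 w) one"
    by (simp add: proj_add proj_zidx_eq_scale_coeff0 vs.scale_left_distrib)
  then show ?thesis unfolding coeff0_def by simp
qed

lemma coeff0_scale: "coeff0 (scale c v) = c * coeff0 v"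
proof -
  have "proj Z (scale c v) = scale (c * coeff0 v) one"
    by (simp add: proj_scale proj_zidx_eq_scale_coeff0)
  then show ?thesis unfolding coeff0_def by simp
qed

lemma coeff0_zero [simp]: "coeff0 0 = 0"
  using coeff0_scale[of 0 0] by simp

lemma coeff0_one: "coeff0 one = 1"
  using coef_scale_one[of 1] unfolding coeff0_def proj_self[OF one_in_S_zidx] by simp

lemma coeff0_eq_scaled: "proj Z v = scale c (proj Z w) \<Longrightarrow> coeff0 v = c * coeff0 w"
  by (metis coeff0_cong coeff0_scale proj_scale)

section \<open>Commutation and exchange of homogeneous elements\<close>

lemma coeff0_mult_proj:
  assumes a: "a \<in> S la"
  shows "coeff0 (mult a b) = coeff0 (mult a (proj la b))"
proof (cases "la \<in> L")
  case True
  have off_diagonal: "proj Z (mult a (proj \<mu> b)) = 0" if "\<mu> \<in> L" "\<mu> \<noteq> la" for \<mu>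
    using proj_mult_outside_fusion[OF True that(1) a proj_in_S] zidx_in_fusion_iff[OF True that(1)] that(2)
    by blast
  have "proj Z (mult a b) = proj Z (mult a (\<Sum>\<mu>\<in>L. proj \<mu> b))"
    by (simp add: sum_proj)
  also have "\<dots> = (\<Sum>\<mu>\<in>L. proj Z (mult a (proj \<mu> b)))"
    by (simp add: mult_sum_right proj_sum)
  also have "\<dots> = (\<Sum>\<mu>\<in>L. if \<mu> = la then proj Z (mult a (proj la b)) else 0)"
    by (rule sum.cong) (simp_all add: off_diagonal)
  also have "\<dots> = proj Z (mult a (proj la b))"
    using True by simp
  finally show ?thesis by (rule coeff0_cong)
next
  case False
  with a S_outside_Lam show ?thesis by simp
qed

lemma proj_mult_commute:
  assumes L: "la1 \<in> L" "la2 \<in> L" "\<nu> \<in> L" and a: "a1 \<in> S la1" "a2 \<in> S la2"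
  shows "proj \<nu> (mult a2 a1) = scale (Bidx la2 la1 \<nu> la1 la2 Z) (proj \<nu> (mult a1 a2))"
proof (cases "\<nu> \<in> fusion la1 la2")
  case True
  then have "Aidx \<nu> la2 la1 Z = {la1}" "Aidx \<nu> la1 la2 Z = {la2}"
    using Aidx_zidx_right L fusion_commute by simp_all
  then show ?thesis
    using braiding[OF L(3) L(1) L(2) zidx_in_Lam a one_in_S_zidx, of la1]
    by (simp add: proj_self a)
next
  case False
  then show ?thesis
    using proj_mult_outside_fusion[OF L(1,2) a] proj_mult_outside_fusion[OF L(2,1) a(2,1)]
      fusion_commute[OF L(1,2)]
    by simp
qed

lemma coeff0_mult_commute:
  assumes "la \<in> L" "a \<in> S la" "b \<in> S la"
  shows "coeff0 (mult b a) = coeff0 (mult a b)"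
proof (cases "sw la \<in> \<int>")
  case True
  have "proj Z (mult b a) = proj Z (mult a b)"
    using proj_mult_commute[OF assms(1,1) zidx_in_Lam assms(2,3)] Bidx_symmetry[OF assms(1) True]
    by simp
  then show ?thesis
    by (rule coeff0_cong)
next
  case False
  with assms have "a = 0"
    using homogeneous_nonintegral_eq_0 by blast
  then show ?thesis
    by simp
qed

lemma coeff0_mult_exchange:
  assumes L: "la1 \<in> L" "la2 \<in> L" "la3 \<in> L" and a: "a1 \<in> S la1" "a2 \<in> S la2" "a3 \<in> S la3"
  shows "coeff0 (mult a2 (proj la2 (mult a1 a3))) =
         Bidx la1 la2 Z la1 la2 la3 * coeff0 (mult a1 (proj la1 (mult a2 a3)))"
proof -
  have "proj Z (mult a2 (proj la2 (mult a1 a3))) =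
      scale (Bidx la1 la2 Z la1 la2 la3) (proj Z (mult a1 (proj la1 (mult a2 a3))))"
  proof (cases "la2 \<in> fusion la1 la3")
    case True
    then have "Aidx Z la2 la1 la3 = {la2}" "Aidx Z la1 la2 la3 = {la1}"
      using Aidx_zidx_left L fusion_rotate by simp_all
    then show ?thesis
      using braiding[OF zidx_in_Lam L a, of la2] by simp
  next
    case False
    then have "la1 \<notin> fusion la2 la3"
      using L fusion_rotate by blast
    with False show ?thesis
      using proj_mult_outside_fusion[OF L(1,3) a(1,3)] proj_mult_outside_fusion[OF L(2,3) a(2,3)]
      by simp
  qed
  then show ?thesis
    by (rule coeff0_eq_scaled)
qed

section \<open>The bilinear form\<close>

lemma bform_eq: "bf a b = (\<Sum>la\<in>L. idx_sign la * coeff0 (mult (proj la a) b))"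
  unfolding bform_def idx_sign_def coeff0_def ..

lemma bform_homogeneous_left:
  assumes "a \<in> S la" "la \<in> L"
  shows "bf a b = idx_sign la * coeff0 (mult a (proj la b))"
proof -
  have "bf a b = (\<Sum>\<nu>\<in>L. if \<nu> = la then idx_sign la * coeff0 (mult a b) else 0)"
    unfolding bform_eq by (rule sum.cong) (simp_all add: proj_homogeneous[OF assms(1)])
  with assms(2) have "bf a b = idx_sign la * coeff0 (mult a b)"
    by simp
  then show ?thesis
    using coeff0_mult_proj[OF assms(1), of b] by simp
qed

lemma bform_eq_diagonal: "bf a b = (\<Sum>la\<in>L. idx_sign la * coeff0 (mult (proj la a) (proj la b)))"
  unfolding bform_eq by (intro sum.cong refl arg_cong2[where f = "(*)"] coeff0_mult_proj proj_in_S)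

lemma bform_homogeneous_right:
  assumes "b \<in> S lb" "lb \<in> L"
  shows "bf a b = idx_sign lb * coeff0 (mult (proj lb a) b)"
proof -
  have "bf a b = (\<Sum>\<nu>\<in>L. if \<nu> = lb then idx_sign lb * coeff0 (mult (proj lb a) b) else 0)"
    unfolding bform_eq_diagonal by (rule sum.cong) (simp_all add: proj_homogeneous[OF assms(1)])
  with assms(2) show ?thesis by simp
qed

lemma bform_orthogonal:
  assumes "la1 \<in> L" "la1 \<noteq> la2" "a \<in> S la1" "b \<in> S la2"
  shows "bf a b = 0"
proof -
  have "proj la1 b = 0"
    using proj_homogeneous[OF assms(4)] assms(2) by simp
  then show ?thesis
    using bform_homogeneous_left[OF assms(3,1)] by simp
qed

lemma bform_commute: "bf a b = bf b a"
  unfolding bform_eq_diagonal by (rule sum.cong) (simp_all add: coeff0_mult_commute proj_in_S)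

lemma bform_add_left: "bf (a + a') b = bf a b + bf a' b"
  unfolding bform_eq by (simp add: proj_add mult_add_left coeff0_add sum.distrib distrib_left)

lemma bform_scale_left: "bf (scale c a) b = c * bf a b"
  unfolding bform_eq
  by (simp add: proj_scale mult_scale_left coeff0_scale sum_distrib_left mult.left_commute)

lemma bform_zero_left [simp]: "bf 0 b = 0"
  by (simp add: bform_eq)

lemma bform_sum_left: "bf (\<Sum>i\<in>I. f i) b = (\<Sum>i\<in>I. bf (f i) b)"
  by (induction I rule: infinite_finite_induct) (simp_all add: bform_add_left)

lemma bform_sum_right: "bf b (\<Sum>i\<in>I. f i) = (\<Sum>i\<in>I. bf b (f i))"
  unfolding bform_commute[of b] by (rule bform_sum_left)

lemma bform_proj: "bf (proj \<mu> a) b = bf a (proj \<mu> b)"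
proof (cases "\<mu> \<in> L")
  case True
  have "bf (proj \<mu> a) b = idx_sign \<mu> * coeff0 (mult (proj \<mu> a) (proj \<mu> b))"
    by (rule bform_homogeneous_left[OF proj_in_S True])
  moreover have "bf a (proj \<mu> b) = (\<Sum>\<nu>\<in>L. if \<nu> = \<mu> then idx_sign \<mu> * coeff0 (mult (proj \<mu> a) (proj \<mu> b)) else 0)"
    unfolding bform_eq_diagonal by (rule sum.cong) (simp_all add: proj_proj)
  ultimately show ?thesis
    using True by simp
next
  case False
  then show ?thesis by (simp add: proj_outside_Lam bform_eq)
qed

lemma bform_one_one: "bf one one = 1"
proof -
  have "idx_sign Z = 1"
    by (simp add: idx_sign_def sw_def zidx_def sum_list_replicate)
  then show ?thesis
    using bform_homogeneous_left[OF one_in_S_zidx zidx_in_Lam]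
    by (simp add: coeff0_one proj_self[OF one_in_S_zidx])
qed

lemma bform_mult_left:
  assumes L: "la1 \<in> L" "la2 \<in> L" "la3 \<in> L" and a: "a1 \<in> S la1" "a2 \<in> S la2" "a3 \<in> S la3"
  shows "bf (mult a1 a2) a3 = idx_sign la1 * bf a2 (mult a1 a3)"
proof -
  define c where "c = coeff0 (mult a1 (proj la1 (mult a2 a3)))"
  define B1 where "B1 = Bidx la1 la3 Z la1 la3 la2"
  define B2 where "B2 = Bidx la3 la2 la1 la2 la3 Z"
  define B3 where "B3 = Bidx la1 la2 Z la1 la2 la3"
  have "bf (mult a1 a2) a3 = idx_sign la3 * coeff0 (mult (proj la3 (mult a1 a2)) a3)"
    by (rule bform_homogeneous_right[OF a(3) L(3)])
  also have "coeff0 (mult (proj la3 (mult a1 a2)) a3) = coeff0 (mult a3 (proj la3 (mult a1 a2)))"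
    by (rule coeff0_mult_commute[OF L(3) a(3) proj_in_S])
  also have "\<dots> = B1 * coeff0 (mult a1 (proj la1 (mult a3 a2)))"
    unfolding B1_def by (rule coeff0_mult_exchange[OF L(1,3,2) a(1,3,2)])
  also have "proj la1 (mult a3 a2) = scale B2 (proj la1 (mult a2 a3))"
    unfolding B2_def by (rule proj_mult_commute[OF L(2,3,1) a(2,3)])
  finally have lhs: "bf (mult a1 a2) a3 = idx_sign la3 * (B1 * (B2 * c))"
    by (simp add: mult_scale_right coeff0_scale c_def)
  have "bf a2 (mult a1 a3) = idx_sign la2 * coeff0 (mult a2 (proj la2 (mult a1 a3)))"
    by (rule bform_homogeneous_left[OF a(2) L(2)])
  also have "coeff0 (mult a2 (proj la2 (mult a1 a3))) = B3 * c"
    unfolding B3_def c_def by (rule coeff0_mult_exchange[OF L a])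
  finally have rhs: "bf a2 (mult a1 a3) = idx_sign la2 * (B3 * c)" .
  show ?thesis
  proof (cases "c = 0")
    case True
    then show ?thesis using lhs rhs by simp
  next
    case False
    then have nonzero: "a1 \<noteq> 0" "a2 \<noteq> 0" "a3 \<noteq> 0" "proj la1 (mult a2 a3) \<noteq> 0"
      by (auto simp: c_def)
    then have int: "sw la1 \<in> \<int>" "sw la2 \<in> \<int>" "sw la3 \<in> \<int>"
      using homogeneous_nonintegral_eq_0 L a by blast+
    have "la1 \<in> fusion la2 la3"
      using proj_mult_outside_fusion[OF L(2,3) a(2,3)] nonzero(4) by blast
    then have "la3 \<in> fusion la1 la2"
      using L fusion_swap fusion_rotate by blast
    then have "idx_sign la3 * B1 * B2 = idx_sign la1 * idx_sign la2 * B3"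
      unfolding B1_def B2_def B3_def by (rule Bidx_invariance_sign[OF L int])
    then show ?thesis
      using lhs rhs by (simp add: algebra_simps)
  qed
qed

section \<open>Non-degeneracy and simplicity\<close>

definition radical :: "'v set" where
  "radical = {a. \<forall>b. bf a b = 0}"

lemma graded_ideal_radical: "graded_ideal l r scale S mult radical"
  unfolding graded_ideal_def
proof (intro conjI)
  show "vs.subspace radical"
    by (rule vs.subspaceI) (auto simp: radical_def bform_add_left bform_scale_left)
  show "\<forall>v\<in>radical. \<forall>la. proj la v \<in> radical"
    by (auto simp: radical_def bform_proj)
  show "\<forall>x. \<forall>a\<in>radical. mult x a \<in> radical"
  proof (intro allI ballI)
    fix x a
    assume a: "a \<in> radical"
    have vanish: "bf (mult (proj \<kappa> x) (proj \<mu> a)) (proj \<nu> b) = 0"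
      if "\<kappa> \<in> L" "\<mu> \<in> L" "\<nu> \<in> L" for \<kappa> \<mu> \<nu> b
    proof -
      have "bf (mult (proj \<kappa> x) (proj \<mu> a)) (proj \<nu> b)
          = idx_sign \<kappa> * bf (proj \<mu> a) (mult (proj \<kappa> x) (proj \<nu> b))"
        by (rule bform_mult_left[OF that proj_in_S proj_in_S proj_in_S])
      also have "bf (proj \<mu> a) (mult (proj \<kappa> x) (proj \<nu> b)) = 0"
        using a by (simp add: radical_def bform_proj)
      finally show ?thesis
        by simp
    qed
    have "bf (mult x a) b = 0" for b
    proof -
      have "bf (mult x a) b = bf (mult (\<Sum>\<kappa>\<in>L. proj \<kappa> x) (\<Sum>\<mu>\<in>L. proj \<mu> a)) (\<Sum>\<nu>\<in>L. proj \<nu> b)"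
        by (simp only: sum_proj)
      also have "\<dots> = (\<Sum>\<nu>\<in>L. \<Sum>\<mu>\<in>L. \<Sum>\<kappa>\<in>L. bf (mult (proj \<kappa> x) (proj \<mu> a)) (proj \<nu> b))"
        by (simp only: mult_sum_left mult_sum_right bform_sum_left bform_sum_right)
      finally show ?thesis
        by (simp add: vanish)
    qed
    then show "mult x a \<in> radical"
      by (simp add: radical_def)
  qed
qed

lemma one_in_graded_ideal:
  assumes nd: "nondegenerate bf" and M: "graded_ideal l r scale S mult M" and "M \<noteq> {0}"
  shows "one \<in> M"
proof -
  have subspace: "vs.subspace M" and proj_in_M: "\<And>v la. v \<in> M \<Longrightarrow> proj la v \<in> M"
    and mult_in_M: "\<And>x m. m \<in> M \<Longrightarrow> mult x m \<in> M"
    using M unfolding graded_ideal_def by blast+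
  obtain m where "m \<in> M" "m \<noteq> 0"
    using \<open>M \<noteq> {0}\<close> vs.subspace_0[OF subspace] by blast
  then obtain \<mu> where \<mu>: "\<mu> \<in> L" "proj \<mu> m \<noteq> 0"
    using exists_proj_neq_0 by blast
  define a where "a = proj \<mu> m"
  have "a \<in> M" "a \<in> S \<mu>"
    using proj_in_M \<open>m \<in> M\<close> proj_in_S by (simp_all add: a_def)
  obtain b where "bf a b \<noteq> 0"
    using nd \<mu>(2) unfolding nondegenerate_def a_def by blast
  define b' where "b' = proj \<mu> b"
  have b': "b' \<in> S \<mu>"
    unfolding b'_def by (rule proj_in_S)
  have "bf a b = idx_sign \<mu> * coeff0 (mult a b')"
    unfolding b'_def by (rule bform_homogeneous_left[OF \<open>a \<in> S \<mu>\<close> \<mu>(1)])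
  with \<open>bf a b \<noteq> 0\<close> have c: "coeff0 (mult a b') \<noteq> 0"
    by auto
  have "proj Z (mult b' a) = scale (coeff0 (mult a b')) one"
    using coeff0_mult_commute[OF \<mu>(1) \<open>a \<in> S \<mu>\<close> b'] proj_zidx_eq_scale_coeff0 by simp
  moreover have "proj Z (mult b' a) \<in> M"
    using proj_in_M mult_in_M \<open>a \<in> M\<close> by blast
  ultimately have "scale (inverse (coeff0 (mult a b'))) (scale (coeff0 (mult a b')) one) \<in> M"
    using vs.subspace_scale[OF subspace] by metis
  with c show ?thesis
    by simp
qed

lemma simple_if_nondegenerate:
  assumes "nondegenerate bf"
  shows "simple_algebra l r scale S mult"
  unfolding simple_algebra_def
proof (intro allI impI)
  fix M
  assume M: "graded_ideal l r scale S mult M"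
  have "M = UNIV" if "M \<noteq> {0}"
  proof -
    have "mult x one \<in> M" for x
      using one_in_graded_ideal[OF assms M that] M unfolding graded_ideal_def by blast
    then show ?thesis
      by auto
  qed
  then show "M = {0} \<or> M = UNIV"
    by blast
qed

lemma nondegenerate_if_simple:
  assumes "simple_algebra l r scale S mult"
  shows "nondegenerate bf"
proof -
  have "one \<notin> radical"
    using bform_one_one by (force simp: radical_def)
  then have radical_0: "radical = {0}"
    using assms graded_ideal_radical unfolding simple_algebra_def by blast
  show ?thesis
    unfolding nondegenerate_def
  proof (intro conjI allI impI)
    fix a
    assume "\<forall>b. bf a b = 0"
    with radical_0 show "a = 0"
      by (auto simp: radical_def)
  next
    fix b
    assume "\<forall>a. bf a b = 0"
    with radical_0 show "b = 0"
      by (auto simp: radical_def bform_commute[of b])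
  qed
qed

end

theorem mainTheorem3:
  fixes l r :: nat
    and scale :: "complex \<Rightarrow> 'v::ab_group_add \<Rightarrow> 'v"
    and S :: "idx \<Rightarrow> 'v set"
    and mult :: "'v \<Rightarrow> 'v \<Rightarrow> 'v"
    and one :: 'v
  assumes FA: "framed_algebra l r scale S mult one"
  shows "(\<forall>la1\<in>Lam l r. \<forall>la2\<in>Lam l r. la1 \<noteq> la2 \<longrightarrow>
            (\<forall>a\<in>S la1. \<forall>b\<in>S la2. bform l r scale S mult one a b = 0))
       \<and> (\<forall>a b. bform l r scale S mult one a b = bform l r scale S mult one b a)
       \<and> (\<forall>la1\<in>Lam l r. \<forall>la2\<in>Lam l r. \<forall>la3\<in>Lam l r. \<forall>a1\<in>S la1. \<forall>a2\<in>S la2. \<forall>a3\<in>S la3.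
            bform l r scale S mult one (mult a1 a2) a3
              = ((-1::complex) powi \<lfloor>sw la1\<rfloor>) * bform l r scale S mult one a2 (mult a1 a3))
       \<and> (nondegenerate (bform l r scale S mult one) \<longleftrightarrow> simple_algebra l r scale S mult)"
proof -
  interpret framed_alg l r scale S mult one
    by (rule framed_alg.intro[OF FA])
  show ?thesis
    using bform_orthogonal bform_commute bform_mult_left
      simple_if_nondegenerate nondegenerate_if_simple
    unfolding idx_sign_def by blast
qed

end
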